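(* Let $d\ge1$, $\alpha\ge1$, and $G\in\mathcal{C}^d_\alpha$ (with a fixed representing system of sets). Let $v$ be a maximal vertex of $G$, let $D_i$ be the set of vertices at distance $i$ from $v$ in $G$, and let $(\hat G,w)$ be the weighted graph obtained from $G$ by giving every edge of $G$ weight $1$ and adding, for every pair $x,y$ of vertices lying in a common $D_i$ such that $y$ contains $x$, an edge $xy$ of weight $2$. Then $\mathrm{dist}_G(x,y)=\mathrm{dist}_{(\hat G,w)}(x,y)$ for all $x,y\in V(G)$.
   Context: The height of a bounded convex set $X\subseteq\mathbb{R}^d$ is the infimum of $h\ge0$ such that $X$ lies between two parallel hyperplanes at distance $h$; its aspect ratio is its diameter divided by its height. $\mathcal{C}^d_\alpha$ is the class of connected intersection graphs of systems of path-connected sets in $\mathbb{R}^d$, each obtained from a compact convex set of aspect ratio at most $\alpha$ by removing some subset of its interior (vertices are identified with the sets; adjacent iff they intersect). For a vertex $x$, $\overline{x}$ denotes the convex hull of the set $x$. A vertex $y$ contains a different vertex $x$ if $\overline{x}\subseteq\overline{y}$; a vertex $x$ is maximal if no other vertex contains it. In a weighted graph, the length of a path is the sum of its edge weights and $\mathrm{dist}$ is the infimum of lengths of connecting paths. *)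

theory Defs
  imports "HOL-Analysis.Analysis"
begin

definition height :: "('a::euclidean_space) set \<Rightarrow> real" where
  "height X = Inf {h. h \<ge> 0 \<and> (\<exists>u b. norm u = 1 \<and> (\<forall>x\<in>X. b \<le> u \<bullet> x \<and> u \<bullet> x \<le> b + h))}"

text \<open>Aspect ratio diameter/height is at most alpha (written without division, so that
  degenerate sets of height 0 and positive diameter have infinite aspect ratio).\<close>
definition aspect_le :: "('a::euclidean_space) set \<Rightarrow> real \<Rightarrow> bool" where
  "aspect_le K \<alpha> \<longleftrightarrow> diameter K \<le> \<alpha> * height K"

definition admissible :: "real \<Rightarrow> ('a::euclidean_space) set \<Rightarrow> bool" where
  "admissible \<alpha> x \<longleftrightarrow> path_connected x \<and>
     (\<exists>K R. compact K \<and> convex K \<and> K \<noteq> {} \<and> aspect_le K \<alpha> \<and> R \<subseteq> interior K \<and> x = K - R)"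

text \<open>Weighted (multi)graphs as sets of directed weighted edges (x, y, weight); walks.\<close>
fun is_walk :: "('a \<times> 'a \<times> real) set \<Rightarrow> 'a \<Rightarrow> ('a \<times> 'a \<times> real) list \<Rightarrow> 'a \<Rightarrow> bool" where
  "is_walk W x [] y = (x = y)"
| "is_walk W x (e # es) y = (e \<in> W \<and> fst e = x \<and> is_walk W (fst (snd e)) es y)"

definition wdist :: "('a \<times> 'a \<times> real) set \<Rightarrow> 'a \<Rightarrow> 'a \<Rightarrow> real" where
  "wdist W x y = Inf {sum_list (map (\<lambda>e. snd (snd e)) es) | es. is_walk W x es y}"

definition igraph :: "'b set set \<Rightarrow> ('b set \<times> 'b set \<times> real) set" where
  "igraph V = {(x, y, 1) | x y. x \<in> V \<and> y \<in> V \<and> x \<noteq> y \<and> x \<inter> y \<noteq> {}}"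

definition graph_connected :: "('a \<times> 'a \<times> real) set \<Rightarrow> 'a set \<Rightarrow> bool" where
  "graph_connected W V \<longleftrightarrow> (\<forall>x\<in>V. \<forall>y\<in>V. \<exists>es. is_walk W x es y)"

text \<open>G in class C^d_alpha, vertices being the sets themselves.\<close>
definition in_class_C :: "real \<Rightarrow> ('a::euclidean_space) set set \<Rightarrow> bool" where
  "in_class_C \<alpha> V \<longleftrightarrow> finite V \<and> V \<noteq> {} \<and> (\<forall>x\<in>V. admissible \<alpha> x) \<and> graph_connected (igraph V) V"

definition vcontains :: "('a::euclidean_space) set \<Rightarrow> 'a set \<Rightarrow> bool" where
  "vcontains y x \<longleftrightarrow> x \<noteq> y \<and> convex hull x \<subseteq> convex hull y"

definition maximal_vertex :: "('a::euclidean_space) set set \<Rightarrow> 'a set \<Rightarrow> bool" where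
  "maximal_vertex V v \<longleftrightarrow> v \<in> V \<and> (\<forall>y\<in>V. \<not> vcontains y v)"

definition layer :: "('a::euclidean_space) set set \<Rightarrow> 'a set \<Rightarrow> nat \<Rightarrow> 'a set set" where
  "layer V v i = {x \<in> V. wdist (igraph V) v x = real i}"

definition hat_graph :: "('a::euclidean_space) set set \<Rightarrow> 'a set \<Rightarrow> ('a set \<times> 'a set \<times> real) set" where
  "hat_graph V v = igraph V \<union>
     {(a, b, 2) | a b x y. (\<exists>i. x \<in> layer V v i \<and> y \<in> layer V v i) \<and> vcontains y x \<and>
        ((a = x \<and> b = y) \<or> (a = y \<and> b = x))}"

end

theory Submission
  imports Defs
begin

text \<open>Every weight-2 edge of the augmented graph can be replaced by a walk of length at most 2
  in the intersection graph, so adding these edges shortens no distance. For layer mates \<open>x\<close>, \<open>y\<close>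
  with \<open>y\<close> containing \<open>x\<close>, let \<open>K\<close> be the convex hull of \<open>y\<close>; its boundary lies in \<open>y\<close>. A shortest
  walk from \<open>v\<close> to \<open>x \<subseteq> K\<close> starts outside the interior of \<open>K\<close> (by maximality of \<open>v\<close>), so by
  connectedness some vertex \<open>c\<close> on it meets the boundary of \<open>K\<close>, hence meets \<open>y\<close>. Since \<open>x\<close> and \<open>y\<close>
  have the same distance from \<open>v\<close>, \<open>c\<close> is at most one step before \<open>x\<close>, so \<open>x, c, y\<close> is a short walk.\<close>

abbreviation walk_weight :: "('a \<times> 'a \<times> real) list \<Rightarrow> real" where
  "walk_weight es \<equiv> sum_list (map (\<lambda>e. snd (snd e)) es)"

lemma is_walk_append:
  "is_walk W a (es1 @ es2) b \<longleftrightarrow> (\<exists>c. is_walk W a es1 c \<and> is_walk W c es2 b)"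
  by (induction es1 arbitrary: a) auto

lemma is_walk_mono: "W \<subseteq> W' \<Longrightarrow> is_walk W a es b \<Longrightarrow> is_walk W' a es b"
  by (induction es arbitrary: a) auto

lemma walk_weight_nonneg:
  "\<forall>e\<in>W. 0 \<le> snd (snd e) \<Longrightarrow> is_walk W a es b \<Longrightarrow> 0 \<le> walk_weight es"
  by (induction es arbitrary: a) (auto intro!: add_nonneg_nonneg)

lemma bdd_below_walk_weights:
  assumes "\<forall>e\<in>W. 0 \<le> snd (snd e)"
  shows "bdd_below {walk_weight es | es. is_walk W a es b}"
  using walk_weight_nonneg[OF assms] by (auto intro: bdd_belowI[of _ 0])

lemma wdist_le_walk_weight:
  assumes "\<forall>e\<in>W. 0 \<le> snd (snd e)" and "is_walk W a es b"
  shows "wdist W a b \<le> walk_weight es"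
  unfolding wdist_def using assms by (auto intro: cInf_lower bdd_below_walk_weights)

lemma is_walk_shortcut:
  assumes "\<And>a b w. (a, b, w) \<in> W' \<Longrightarrow> \<exists>p. is_walk W a p b \<and> walk_weight p \<le> w"
  shows "is_walk W' a es b \<Longrightarrow> \<exists>es'. is_walk W a es' b \<and> walk_weight es' \<le> walk_weight es"
proof (induction es arbitrary: a)
  case Nil
  then show ?case by (intro exI[of _ "[]"]) simp
next
  case (Cons e es)
  obtain a' w where e: "e = (a, a', w)" "e \<in> W'" and rest: "is_walk W' a' es b"
    using Cons.prems by (cases e) auto
  obtain p where p: "is_walk W a p a'" "walk_weight p \<le> w"
    using assms e by blast
  obtain es' where es': "is_walk W a' es' b" "walk_weight es' \<le> walk_weight es"
    using Cons.IH[OF rest] by blast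
  show ?case
    using p es' e by (intro exI[of _ "p @ es'"]) (auto simp: is_walk_append)
qed

lemma wdist_eq_if_shortcut:
  assumes sub: "W \<subseteq> W'" and nonneg: "\<forall>e\<in>W'. 0 \<le> snd (snd e)"
    and reach: "\<exists>es. is_walk W x es y"
    and shortcut: "\<And>a b w. (a, b, w) \<in> W' \<Longrightarrow> \<exists>p. is_walk W a p b \<and> walk_weight p \<le> w"
  shows "wdist W x y = wdist W' x y"
proof -
  define S where "S = {walk_weight es | es. is_walk W x es y}"
  define S' where "S' = {walk_weight es | es. is_walk W' x es y}"
  have "S \<noteq> {}" using reach unfolding S_def by blast
  have "S \<subseteq> S'" unfolding S_def S'_def using is_walk_mono[OF sub] by blast
  have "bdd_below S" unfolding S_def using nonneg sub by (intro bdd_below_walk_weights) blast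
  have "bdd_below S'" unfolding S'_def using nonneg by (rule bdd_below_walk_weights)
  have "Inf S' \<le> Inf S" using \<open>S \<noteq> {}\<close> \<open>bdd_below S'\<close> \<open>S \<subseteq> S'\<close> by (rule cInf_superset_mono)
  moreover have "Inf S \<le> Inf S'"
  proof (rule cInf_greatest)
    show "S' \<noteq> {}" using \<open>S \<noteq> {}\<close> \<open>S \<subseteq> S'\<close> by blast
    fix s assume "s \<in> S'"
    then obtain es where "is_walk W' x es y" "s = walk_weight es" unfolding S'_def by blast
    then obtain es' where "is_walk W x es' y" "walk_weight es' \<le> s"
      using is_walk_shortcut[OF shortcut] by blast
    then show "Inf S \<le> s"
      using cInf_lower[OF _ \<open>bdd_below S\<close>, of "walk_weight es'"] unfolding S_def by force
  qed
  ultimately show ?thesis unfolding wdist_def S_def S'_def by simp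
qed

lemma walk_weight_igraph: "is_walk (igraph V) a es b \<Longrightarrow> walk_weight es = real (length es)"
  by (induction es arbitrary: a) (auto simp: igraph_def)

lemma igraph_weights_nonneg: "\<forall>e\<in>igraph V. 0 \<le> snd (snd e)"
  by (auto simp: igraph_def)

lemma is_walk_igraph_rev:
  "is_walk (igraph V) a es b \<Longrightarrow> is_walk (igraph V) b (map (\<lambda>(p, q, w). (q, p, w)) (rev es)) a"
  by (induction es arbitrary: a) (auto simp: is_walk_append igraph_def)

lemma wdist_igraph_le_length:
  "is_walk (igraph V) a es b \<Longrightarrow> wdist (igraph V) a b \<le> real (length es)"
  using wdist_le_walk_weight[OF igraph_weights_nonneg] walk_weight_igraph by metis

lemma wdist_igraph_shortest_walk:
  assumes "is_walk (igraph V) a es0 b"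
  obtains es where "is_walk (igraph V) a es b" "wdist (igraph V) a b = real (length es)"
proof -
  define n where "n = (LEAST n. \<exists>es. is_walk (igraph V) a es b \<and> length es = n)"
  obtain es where es: "is_walk (igraph V) a es b" "length es = n"
    using LeastI[of "\<lambda>n. \<exists>es. is_walk (igraph V) a es b \<and> length es = n" "length es0"] assms
    unfolding n_def by blast
  have "real n \<le> wdist (igraph V) a b"
    unfolding wdist_def
  proof (rule cInf_greatest)
    show "{walk_weight es | es. is_walk (igraph V) a es b} \<noteq> {}" using assms by blast
    fix s assume "s \<in> {walk_weight es | es. is_walk (igraph V) a es b}"
    then obtain es' where "is_walk (igraph V) a es' b" "s = real (length es')"
      using walk_weight_igraph by blast
    then show "real n \<le> s" unfolding n_def by (auto intro: Least_le)
  qed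
  then have "wdist (igraph V) a b = real (length es)"
    using wdist_igraph_le_length[OF es(1)] es(2) by simp
  with es(1) show thesis by (rule that)
qed

lemma walk_meets_frontier:
  assumes "is_walk (igraph V) a es b" "a \<in> V" "\<forall>z\<in>V. connected z" "closed K"
    "b \<subseteq> K" "\<not> a \<subseteq> interior K"
  shows "\<exists>c es1 es2. c \<in> V \<and> is_walk (igraph V) a es1 c \<and> is_walk (igraph V) c es2 b
     \<and> length es1 + length es2 = length es \<and> c \<inter> frontier K \<noteq> {}"
  using assms
proof (induction es arbitrary: a)
  case Nil
  then have "a \<inter> frontier K \<noteq> {}" by (auto simp: frontier_def closure_closed)
  then show ?case using Nil by (intro exI[of _ a] exI[of _ "[]"]) auto
next
  case (Cons e es)
  obtain a' where e: "e = (a, a', 1)" "a' \<in> V" "a \<inter> a' \<noteq> {}"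
    and rest: "is_walk (igraph V) a' es b"
    using Cons.prems(1) unfolding igraph_def by force
  show ?case
  proof (cases "a' \<subseteq> interior K")
    case False
    then obtain c es1 es2 where "c \<in> V" "is_walk (igraph V) a' es1 c" "is_walk (igraph V) c es2 b"
      "length es1 + length es2 = length es" "c \<inter> frontier K \<noteq> {}"
      using Cons.IH[OF rest e(2) Cons.prems(3-5)] by blast
    then show ?thesis using Cons.prems(1) e
      by (intro exI[of _ c] exI[of _ "e # es1"] exI[of _ es2]) auto
  next
    case True
    have "a \<inter> frontier (interior K) \<noteq> {}"
      by (rule connected_Int_frontier) (use Cons.prems True e in auto)
    then have "a \<inter> frontier K \<noteq> {}" using frontier_interior_subset by blast
    then show ?thesis using Cons.prems
      by (intro exI[of _ a] exI[of _ "[]"] exI[of _ "e # es"]) auto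
  qed
qed

text \<open>The hull of \<open>K - R\<close> is \<open>K\<close> itself, because \<open>K\<close> is the hull of its boundary (Krein--Milman).\<close>

lemma admissible_convex_hull:
  assumes "admissible \<alpha> x"
  shows "compact (convex hull x)" "frontier (convex hull x) \<subseteq> x"
proof -
  obtain K R where K: "compact K" "convex K" "R \<subseteq> interior K" "x = K - R"
    using assms unfolding admissible_def by blast
  have frontier: "frontier K \<subseteq> x"
    using K by (auto simp: frontier_def closure_closed compact_imp_closed)
  have "convex hull x \<subseteq> K" using K by (intro hull_minimal) auto
  moreover have "K \<subseteq> convex hull x"
    using Krein_Milman_frontier[OF K(2,1)] hull_mono[OF frontier, of convex] by simp
  ultimately have "convex hull x = K" by blast
  then show "compact (convex hull x)" "frontier (convex hull x) \<subseteq> x"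
    using K(1) frontier by simp_all
qed

lemma layer_containment_walk:
  fixes V :: "('a::euclidean_space) set set"
  assumes adm: "\<forall>z\<in>V. admissible \<alpha> z" and conn: "graph_connected (igraph V) V"
    and M: "maximal_vertex V v"
    and x: "x \<in> layer V v i" and y: "y \<in> layer V v i" and yx: "vcontains y x"
  shows "\<exists>es. is_walk (igraph V) x es y \<and> length es \<le> 2"
proof -
  define K where "K = convex hull y"
  have vV: "v \<in> V" using M by (simp add: maximal_vertex_def)
  have xV: "x \<in> V" and dx: "wdist (igraph V) v x = real i" using x by (auto simp: layer_def)
  have yV: "y \<in> V" and dy: "wdist (igraph V) v y = real i" using y by (auto simp: layer_def)
  have xy: "x \<noteq> y" and hull_xy: "convex hull x \<subseteq> K" using yx by (auto simp: vcontains_def K_def)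
  have connected: "\<forall>z\<in>V. connected z"
    using adm by (auto simp: admissible_def path_connected_imp_connected)
  have "compact K" and frontier_y: "frontier K \<subseteq> y"
    using admissible_convex_hull adm yV unfolding K_def by blast+
  obtain es where es: "is_walk (igraph V) v es x" "length es = i"
    using conn vV xV dx wdist_igraph_shortest_walk unfolding graph_connected_def
    by (metis of_nat_eq_iff)
  have "x \<subseteq> K" using hull_xy hull_subset[of x convex] by blast
  have "v \<noteq> y"
  proof
    assume "v = y"
    then have "i = 0" using dy wdist_igraph_le_length[of V v "[]" v] by simp
    then show False using es \<open>v = y\<close> xy by simp
  qed
  have "\<not> v \<subseteq> interior K"
  proof
    assume "v \<subseteq> interior K"
    then have "convex hull v \<subseteq> K"
      unfolding K_def by (meson convex_convex_hull hull_minimal interior_subset order_trans)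
    then show False using M yV \<open>v \<noteq> y\<close> by (auto simp: maximal_vertex_def vcontains_def K_def)
  qed
  then obtain c es1 es2 where c: "c \<in> V" "is_walk (igraph V) v es1 c" "is_walk (igraph V) c es2 x"
    "length es1 + length es2 = i" "c \<inter> frontier K \<noteq> {}"
    using walk_meets_frontier[OF es(1) vV connected compact_imp_closed[OF \<open>compact K\<close>] \<open>x \<subseteq> K\<close>]
      es(2) by blast
  have cy: "c \<inter> y \<noteq> {}" using c(5) frontier_y by blast
  have "c \<noteq> y"
  proof
    assume "c = y"
    then have "i \<le> length es1" using wdist_igraph_le_length[OF c(2)] dy by simp
    then have "es2 = []" using c(4) by (simp flip: length_0_conv)
    then show False using c(3) \<open>c = y\<close> xy by simp
  qed
  then have edge_cy: "is_walk (igraph V) c [(c, y, 1)] y" using c(1) yV cy by (auto simp: igraph_def)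
  have "is_walk (igraph V) v (es1 @ [(c, y, 1)]) y" using c(2) edge_cy by (auto simp: is_walk_append)
  then have "length es2 \<le> 1" using wdist_igraph_le_length dy c(4) by fastforce
  then show ?thesis
    using is_walk_igraph_rev[OF c(3)] edge_cy
    by (intro exI[of _ "map (\<lambda>(p, q, w). (q, p, w)) (rev es2) @ [(c, y, 1)]"])
      (auto simp: is_walk_append)
qed

lemma hat_graph_edge_shortcut:
  fixes V :: "('a::euclidean_space) set set"
  assumes adm: "\<forall>z\<in>V. admissible \<alpha> z" and conn: "graph_connected (igraph V) V"
    and M: "maximal_vertex V v" and e: "(a, b, w) \<in> hat_graph V v"
  shows "\<exists>p. is_walk (igraph V) a p b \<and> walk_weight p \<le> w"
proof (cases "(a, b, w) \<in> igraph V")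
  case True
  then show ?thesis by (intro exI[of _ "[(a, b, w)]"]) (auto simp: igraph_def)
next
  case False
  then obtain x y i where "w = 2" "x \<in> layer V v i" "y \<in> layer V v i" "vcontains y x"
    and ab: "(a = x \<and> b = y) \<or> (a = y \<and> b = x)"
    using e unfolding hat_graph_def by auto
  then obtain p where p: "is_walk (igraph V) x p y" "length p \<le> 2"
    using layer_containment_walk[OF adm conn M] by blast
  show ?thesis
    using ab p is_walk_igraph_rev[OF p(1)] walk_weight_igraph \<open>w = 2\<close> by fastforce
qed

theorem lemma5p3:
  fixes V :: "(real ^ 'd) set set" and v :: "(real ^ 'd) set" and \<alpha> :: real
  assumes "\<alpha> \<ge> 1"
    and "in_class_C \<alpha> V"
    and "maximal_vertex V v"
  shows "\<forall>x\<in>V. \<forall>y\<in>V. wdist (igraph V) x y = wdist (hat_graph V v) x y"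
proof (intro ballI)
  fix x y assume "x \<in> V" "y \<in> V"
  have adm: "\<forall>z\<in>V. admissible \<alpha> z" and conn: "graph_connected (igraph V) V"
    using assms(2) by (auto simp: in_class_C_def)
  show "wdist (igraph V) x y = wdist (hat_graph V v) x y"
  proof (rule wdist_eq_if_shortcut)
    show "igraph V \<subseteq> hat_graph V v" by (auto simp: hat_graph_def)
    show "\<forall>e\<in>hat_graph V v. 0 \<le> snd (snd e)" by (auto simp: hat_graph_def igraph_def)
    show "\<exists>es. is_walk (igraph V) x es y"
      using conn \<open>x \<in> V\<close> \<open>y \<in> V\<close> by (auto simp: graph_connected_def)
    show "\<exists>p. is_walk (igraph V) a p b \<and> walk_weight p \<le> w" if "(a, b, w) \<in> hat_graph V v" for a b w
      using hat_graph_edge_shortcut[OF adm conn assms(3) that] .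
  qed
qed

end
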